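(* Assume Non-Degeneracy Assumption I, and let $U,P$ be the optimal solutions constructed from a base sequence and a nonnegative solution of the base-sequence system as in the Structure Theorem part (i) (all boundary values, $\tau_n$, $x^n$, $q^n$ nonnegative). Let $\check U=\int_0^Tu(t)dt=\sum_n\tau_nu^n$ and $\check P=\int_0^Tp(t)dt=\sum_n\tau_np^n$. Then $(\mathbf{u}^0,\mathbf{u}^N)$ is an optimal solution of the LP $$\max\ (\gamma+cT-A^\top\check P)^\top\mathbf{u}^0+\gamma^\top\mathbf{u}^N\ \text{ s.t. } A\mathbf{u}^0\le\beta,\ A\mathbf{u}^0+A\mathbf{u}^N\le\beta+bT-A\check U,\ \mathbf{u}^0,\mathbf{u}^N\ge0,$$ and $(\mathbf{p}^N,\mathbf{p}^0)$ is an optimal solution of its dual LP $$\min\ (\beta+bT-A\check U)^\top\mathbf{p}^N+\beta^\top\mathbf{p}^0\ \text{ s.t. } A^\top\mathbf{p}^N\ge\gamma,\ A^\top\mathbf{p}^N+A^\top\mathbf{p}^0\ge\gamma+cT-A^\top\check P,\ \mathbf{p}^N,\mathbf{p}^0\ge0.$$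
   Context: Let $A$ be a real $K\times J$ matrix, $\beta,b\in\mathbb{R}^K$, $\gamma,c\in\mathbb{R}^J$, $T>0$. M-CLP: maximize $\int_{0-}^T(\gamma+(T-t)c)^\top dU(t)$ over nonnegative, non-decreasing, right-continuous $U:[0,T]\to\mathbb{R}^J$ with $U(0-)=0$, subject to $AU(t)\le\beta+bt$, $0\le t\le T$. M-CLP$^*$: minimize $\int_{0-}^T(\beta+(T-t)b)^\top dP(t)$ over nonnegative, non-decreasing, right-continuous $P:[0,T]\to\mathbb{R}^K$ with $P(0-)=0$, subject to $A^\top P(t)\ge\gamma+ct$. Non-Degeneracy Assumption I: $b$ is not a linear combination of fewer than $K$ columns of $[A\ I]$ and $c$ is not a linear combination of fewer than $J$ columns of $[A^\top\ I]$. Bases: index sets $\mathcal{K}\subseteq\{1..K\},\mathcal{J}\subseteq\{1..J\}$ such that $\dot x_k$ ($k\in\mathcal{K}$), $u_j$ ($j\notin\mathcal{J}$) are $K$ variables with independent columns in $[A\ I]$; primal basic solution solves $Au+\dot x=b$ with $u_j=0$ ($j\in\mathcal{J}$), $\dot x_k=0$ ($k\notin\mathcal{K}$); dual basic solution solves $A^\top p-\dot q=c$ with $p_k=0$ ($k\in\mathcal{K}$), $\dot q_j=0$ ($j\notin\mathcal{J}$). Admissible: $u,p\ge0$. Adjacent: one pivot apart, primal variable $v_n$ leaving from $B_n$ to $B_{n+1}$. A base sequence consists of admissible, consecutively adjacent bases $B_1..B_N$ (index sets $\mathcal{K}_n,\mathcal{J}_n$, rates $u^n,\dot x^n,p^n,\dot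 q^n$) plus index sets $\mathcal{K}_0,\mathcal{J}_0,\mathcal{K}_{N+1},\mathcal{J}_{N+1}$ with $\mathcal{K}_0\subseteq\mathcal{K}_1$, $\mathcal{J}_{N+1}\subseteq\mathcal{J}_N$. The base-sequence system in unknowns $\mathbf{u}^0,\mathbf{u}^N,q^N,\mathbf{q}^0\in\mathbb{R}^J$, $x^0,\mathbf{x}^N,\mathbf{p}^0,\mathbf{p}^N\in\mathbb{R}^K$, $\tau_1..\tau_N$, with $x^n=x^0+\sum_{m\le n}\dot x^m\tau_m$, $q^n=q^N+\sum_{m>n}\dot q^m\tau_m$, is: (a) $x^n_k=0$ if $v_n=\dot x_k$, $q^n_j=0$ if $v_n=u_j$ ($n=1..N-1$); (b) $\sum\tau_n=T$; (c) $\mathbf{u}^0_j=0$ ($j\in\mathcal{J}_0$), $x^0_k=0$ ($k\notin\mathcal{K}_0$), $\mathbf{p}^0_k=0$ ($k\in\mathcal{K}_0$), $\mathbf{q}^0_j=0$ ($j\notin\mathcal{J}_0$), $\mathbf{p}^N_k=0$ ($k\in\mathcal{K}_{N+1}$), $q^N_j=0$ ($j\notin\mathcal{J}_{N+1}$), $\mathbf{u}^N_j=0$ ($j\in\mathcal{J}_{N+1}$), $\mathbf{x}^N_k=0$ ($k\notin\mathcal{K}_{N+1}$); (d) $A\mathbf{u}^0+x^0=\beta$, $A^\top\mathbf{p}^N-q^N=\gamma$; (e) $A\mathbf{u}^N+\mathbf{x}^N-x^N=0$, $A^\top\mathbf{p}^0-\mathbf{q}^0+q^0=0$. Constructed functions: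 $t_n=\sum_{m\le n}\tau_m$, $u(t)=u^n$ on $(t_{n-1},t_n)$, $U(t)=\mathbf{u}^0+\int_0^tu$ ($t<T$), $U(T)=U(T-)+\mathbf{u}^N$; $p(s)=p^n$ on $(T-t_n,T-t_{n-1})$, $P(s)=\mathbf{p}^N+\int_0^sp$ ($s<T$), $P(T)=P(T-)+\mathbf{p}^0$. *)

theory Defs
  imports "HOL-Analysis.Analysis"
begin

text \<open>Dimensions are finite index types: rows of A indexed by 'k (K of them),
columns by 'j (J of them); A :: real^'j^'k, so A *v u :: real^'k and transpose A *v p :: real^'j.\<close>

text \<open>Columns of [A I] indexed by 'j + 'k and columns of [A^T I] indexed by 'k + 'j.\<close>
definition colAI :: "real^'j^'k \<Rightarrow> 'j + 'k \<Rightarrow> real^'k" where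
  "colAI A c = (case c of Inl j \<Rightarrow> column j A | Inr k \<Rightarrow> axis k 1)"

definition colATI :: "real^'j^'k \<Rightarrow> 'k + 'j \<Rightarrow> real^'j" where
  "colATI A c = (case c of Inl k \<Rightarrow> row k A | Inr j \<Rightarrow> axis j 1)"

definition nondeg_I :: "real^'j^'k \<Rightarrow> real^'k \<Rightarrow> real^'j \<Rightarrow> bool" where
  "nondeg_I A b c \<longleftrightarrow>
     (\<forall>C. card C < CARD('k) \<longrightarrow> b \<notin> span (colAI A ` C)) \<and>
     (\<forall>C. card C < CARD('j) \<longrightarrow> c \<notin> span (colATI A ` C))"

text \<open>Primal variables: Inl k stands for xdot_k, Inr j for u_j.
 Basic variables of the base (Ks, Js): xdot_k (k in Ks) and u_j (j not in Js).\<close>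
definition basic_vars :: "'k set \<Rightarrow> 'j set \<Rightarrow> ('k + 'j) set" where
  "basic_vars Ks Js = Inl ` Ks \<union> Inr ` (- Js)"

definition is_base :: "real^'j^'k \<Rightarrow> 'k set \<Rightarrow> 'j set \<Rightarrow> bool" where
  "is_base A Ks Js \<longleftrightarrow>
     card Ks + card (- Js) = CARD('k) \<and>
     (\<forall>(a::'j \<Rightarrow> real) (d::'k \<Rightarrow> real).
        (\<Sum>j\<in>-Js. a j *\<^sub>R column j A) + (\<Sum>k\<in>Ks. d k *\<^sub>R axis k 1) = 0 \<longrightarrow>
        (\<forall>j\<in>-Js. a j = 0) \<and> (\<forall>k\<in>Ks. d k = 0))"

definition primal_basic_sol :: "real^'j^'k \<Rightarrow> real^'k \<Rightarrow> 'k set \<Rightarrow> 'j set \<Rightarrow> real^'j \<Rightarrow> real^'k \<Rightarrow> bool" where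
  "primal_basic_sol A b Ks Js u xd \<longleftrightarrow>
     A *v u + xd = b \<and> (\<forall>j\<in>Js. u $ j = 0) \<and> (\<forall>k. k \<notin> Ks \<longrightarrow> xd $ k = 0)"

definition dual_basic_sol :: "real^'j^'k \<Rightarrow> real^'j \<Rightarrow> 'k set \<Rightarrow> 'j set \<Rightarrow> real^'k \<Rightarrow> real^'j \<Rightarrow> bool" where
  "dual_basic_sol A c Ks Js p qd \<longleftrightarrow>
     transpose A *v p - qd = c \<and> (\<forall>k\<in>Ks. p $ k = 0) \<and> (\<forall>j. j \<notin> Js \<longrightarrow> qd $ j = 0)"

definition adjacent_leaving :: "'k set \<Rightarrow> 'j set \<Rightarrow> 'k set \<Rightarrow> 'j set \<Rightarrow> ('k + 'j) \<Rightarrow> bool" where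
  "adjacent_leaving K1 J1 K2 J2 v \<longleftrightarrow>
     v \<in> basic_vars K1 J1 \<and>
     (\<exists>w. w \<notin> basic_vars K1 J1 \<and> basic_vars K2 J2 = (basic_vars K1 J1 - {v}) \<union> {w})"

text \<open>Base sequence B_1..B_N with index sets Ks n, Js n (n = 0..N+1), rates u n, xd n, p n, qd n,
 and leaving variables v n (n = 1..N-1).\<close>
definition base_sequence ::
  "real^'j^'k \<Rightarrow> real^'k \<Rightarrow> real^'j \<Rightarrow> nat \<Rightarrow> (nat \<Rightarrow> 'k set) \<Rightarrow> (nat \<Rightarrow> 'j set) \<Rightarrow>
   (nat \<Rightarrow> real^'j) \<Rightarrow> (nat \<Rightarrow> real^'k) \<Rightarrow> (nat \<Rightarrow> real^'k) \<Rightarrow> (nat \<Rightarrow> real^'j) \<Rightarrow>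
   (nat \<Rightarrow> 'k + 'j) \<Rightarrow> bool" where
  "base_sequence A b c N Ks Js u xd p qd v \<longleftrightarrow>
     1 \<le> N \<and>
     (\<forall>n\<in>{1..N}. is_base A (Ks n) (Js n) \<and>
        primal_basic_sol A b (Ks n) (Js n) (u n) (xd n) \<and>
        dual_basic_sol A c (Ks n) (Js n) (p n) (qd n) \<and>
        0 \<le> u n \<and> 0 \<le> p n) \<and>
     (\<forall>n\<in>{1..<N}. adjacent_leaving (Ks n) (Js n) (Ks (n+1)) (Js (n+1)) (v n)) \<and>
     Ks 0 \<subseteq> Ks 1 \<and> Js (N+1) \<subseteq> Js N"

definition xseq :: "real^'k \<Rightarrow> (nat \<Rightarrow> real^'k) \<Rightarrow> (nat \<Rightarrow> real) \<Rightarrow> nat \<Rightarrow> real^'k" where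
  "xseq x0 xd \<tau> n = x0 + (\<Sum>m\<in>{1..n}. \<tau> m *\<^sub>R xd m)"

definition qseq :: "nat \<Rightarrow> real^'j \<Rightarrow> (nat \<Rightarrow> real^'j) \<Rightarrow> (nat \<Rightarrow> real) \<Rightarrow> nat \<Rightarrow> real^'j" where
  "qseq N qN qd \<tau> n = qN + (\<Sum>m\<in>{n+1..N}. \<tau> m *\<^sub>R qd m)"

text \<open>The base-sequence system (a)-(e). Unknowns: u0b = bold u^0, uNb = bold u^N, qN = q^N,
 q0b = bold q^0, x0 = x^0, xNb = bold x^N, p0b = bold p^0, pNb = bold p^N, tau.\<close>
definition base_seq_system ::
  "real^'j^'k \<Rightarrow> real^'k \<Rightarrow> real^'j \<Rightarrow> real \<Rightarrow> nat \<Rightarrow> (nat \<Rightarrow> 'k set) \<Rightarrow> (nat \<Rightarrow> 'j set) \<Rightarrow>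
   (nat \<Rightarrow> real^'k) \<Rightarrow> (nat \<Rightarrow> real^'j) \<Rightarrow> (nat \<Rightarrow> 'k + 'j) \<Rightarrow>
   real^'j \<Rightarrow> real^'j \<Rightarrow> real^'j \<Rightarrow> real^'j \<Rightarrow> real^'k \<Rightarrow> real^'k \<Rightarrow> real^'k \<Rightarrow> real^'k \<Rightarrow>
   (nat \<Rightarrow> real) \<Rightarrow> bool" where
  "base_seq_system A \<beta> \<gamma> T N Ks Js xd qd v u0b uNb qN q0b x0 xNb p0b pNb \<tau> \<longleftrightarrow>
     (let x = xseq x0 xd \<tau>; q = qseq N qN qd \<tau> in
      (\<forall>n\<in>{1..<N}. (\<forall>k. v n = Inl k \<longrightarrow> x n $ k = 0) \<and> (\<forall>j. v n = Inr j \<longrightarrow> q n $ j = 0)) \<and>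
      (\<Sum>n\<in>{1..N}. \<tau> n) = T \<and>
      (\<forall>j\<in>Js 0. u0b $ j = 0) \<and> (\<forall>k. k \<notin> Ks 0 \<longrightarrow> x0 $ k = 0) \<and>
      (\<forall>k\<in>Ks 0. p0b $ k = 0) \<and> (\<forall>j. j \<notin> Js 0 \<longrightarrow> q0b $ j = 0) \<and>
      (\<forall>k\<in>Ks (N+1). pNb $ k = 0) \<and> (\<forall>j. j \<notin> Js (N+1) \<longrightarrow> qN $ j = 0) \<and>
      (\<forall>j\<in>Js (N+1). uNb $ j = 0) \<and> (\<forall>k. k \<notin> Ks (N+1) \<longrightarrow> xNb $ k = 0) \<and>
      A *v u0b + x0 = \<beta> \<and> transpose A *v pNb - qN = \<gamma> \<and>
      A *v uNb + xNb - x N = 0 \<and> transpose A *v p0b - q0b + q 0 = 0)"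

definition bLP_feasible :: "real^'j^'k \<Rightarrow> real^'k \<Rightarrow> real^'k \<Rightarrow> real \<Rightarrow> real^'j \<Rightarrow> real^'j \<Rightarrow> real^'j \<Rightarrow> bool" where
  "bLP_feasible A \<beta> b T Uc u0 uN \<longleftrightarrow>
     A *v u0 \<le> \<beta> \<and> A *v u0 + A *v uN \<le> \<beta> + T *\<^sub>R b - A *v Uc \<and> 0 \<le> u0 \<and> 0 \<le> uN"

definition bLP_obj :: "real^'j^'k \<Rightarrow> real^'j \<Rightarrow> real^'j \<Rightarrow> real \<Rightarrow> real^'k \<Rightarrow> real^'j \<Rightarrow> real^'j \<Rightarrow> real" where
  "bLP_obj A \<gamma> c T Pc u0 uN = (\<gamma> + T *\<^sub>R c - transpose A *v Pc) \<bullet> u0 + \<gamma> \<bullet> uN"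

definition bLP_optimal where
  "bLP_optimal A \<beta> b \<gamma> c T Uc Pc u0 uN \<longleftrightarrow>
     bLP_feasible A \<beta> b T Uc u0 uN \<and>
     (\<forall>u0' uN'. bLP_feasible A \<beta> b T Uc u0' uN' \<longrightarrow>
        bLP_obj A \<gamma> c T Pc u0' uN' \<le> bLP_obj A \<gamma> c T Pc u0 uN)"

definition bDLP_feasible :: "real^'j^'k \<Rightarrow> real^'j \<Rightarrow> real^'j \<Rightarrow> real \<Rightarrow> real^'k \<Rightarrow> real^'k \<Rightarrow> real^'k \<Rightarrow> bool" where
  "bDLP_feasible A \<gamma> c T Pc pN p0 \<longleftrightarrow>
     transpose A *v pN \<ge> \<gamma> \<and>
     transpose A *v pN + transpose A *v p0 \<ge> \<gamma> + T *\<^sub>R c - transpose A *v Pc \<and>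
     0 \<le> pN \<and> 0 \<le> p0"

definition bDLP_obj :: "real^'j^'k \<Rightarrow> real^'k \<Rightarrow> real^'k \<Rightarrow> real \<Rightarrow> real^'j \<Rightarrow> real^'k \<Rightarrow> real^'k \<Rightarrow> real" where
  "bDLP_obj A \<beta> b T Uc pN p0 = (\<beta> + T *\<^sub>R b - A *v Uc) \<bullet> pN + \<beta> \<bullet> p0"

definition bDLP_optimal where
  "bDLP_optimal A \<beta> b \<gamma> c T Uc Pc pN p0 \<longleftrightarrow>
     bDLP_feasible A \<gamma> c T Pc pN p0 \<and>
     (\<forall>pN' p0'. bDLP_feasible A \<gamma> c T Pc pN' p0' \<longrightarrow>
        bDLP_obj A \<beta> b T Uc pN p0 \<le> bDLP_obj A \<beta> b T Uc pN' p0')"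

end

theory Submission
  imports Defs
begin

text \<open>Integrating the rates over the base sequence, the basic-solution equations give
  \<open>x\<^sup>N = x\<^sup>0 + T b - A Uc\<close> and \<open>q\<^sup>0 = q\<^sup>N + A\<^sup>T Pc - T c\<close> with \<open>Uc = \<Sum> \<tau>\<^sub>n u\<^sup>n\<close>, \<open>Pc = \<Sum> \<tau>\<^sub>n p\<^sup>n\<close>.
  So equations (d) and (e) of the base-sequence system say that \<open>x0, xNb\<close> are the primal slacks of
  \<open>(u0b, uNb)\<close> and \<open>qN, q0b\<close> the dual slacks of \<open>(pNb, p0b)\<close> in the boundary LP, while the index-set
  conditions (c) are complementary slackness. Nonnegativity gives feasibility of both, complementary
  slackness equal objective values, and weak duality then gives optimality.\<close>

declare transpose_matrix_vector[simp del]

lemma inner_le_inner_nonneg: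
  fixes a b x :: "real^'n"
  assumes "0 \<le> x" "a \<le> b"
  shows "a \<bullet> x \<le> b \<bullet> x"
  using assms unfolding inner_vec_def less_eq_vec_def
  by (auto intro!: sum_mono mult_right_mono)

lemma inner_eq_0_if_disjoint_support:
  fixes x y :: "real^'n"
  assumes "\<And>i. x $ i = 0 \<or> y $ i = 0"
  shows "x \<bullet> y = 0"
  unfolding inner_vec_def using assms by (auto intro!: sum.neutral)

lemma inner_transpose_mult:
  fixes A :: "real^'j^'k"
  shows "(transpose A *v p) \<bullet> x = p \<bullet> (A *v x)"
  by (simp add: transpose_matrix_vector dot_lmul_matrix)

lemma boundary_LP_weak_duality:
  fixes A :: "real^'j^'k"
  assumes "bLP_feasible A \<beta> b T Uc u0 uN" "bDLP_feasible A \<gamma> c T Pc pN p0"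
  shows "bLP_obj A \<gamma> c T Pc u0 uN \<le> bDLP_obj A \<beta> b T Uc pN p0"
proof -
  from assms have f: "A *v u0 \<le> \<beta>" "A *v u0 + A *v uN \<le> \<beta> + T *\<^sub>R b - A *v Uc"
    "0 \<le> u0" "0 \<le> uN" "transpose A *v pN \<ge> \<gamma>"
    "transpose A *v pN + transpose A *v p0 \<ge> \<gamma> + T *\<^sub>R c - transpose A *v Pc"
    "0 \<le> pN" "0 \<le> p0"
    unfolding bLP_feasible_def bDLP_feasible_def by auto
  have "bLP_obj A \<gamma> c T Pc u0 uN
      \<le> (transpose A *v pN + transpose A *v p0) \<bullet> u0 + (transpose A *v pN) \<bullet> uN"
    unfolding bLP_obj_def
    using inner_le_inner_nonneg[OF f(3) f(6)] inner_le_inner_nonneg[OF f(4) f(5)] by linarith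
  also have "\<dots> = pN \<bullet> (A *v u0 + A *v uN) + p0 \<bullet> (A *v u0)"
    by (simp add: inner_add_left inner_add_right inner_transpose_mult)
  also have "\<dots> \<le> (\<beta> + T *\<^sub>R b - A *v Uc) \<bullet> pN + \<beta> \<bullet> p0"
    using inner_le_inner_nonneg[OF f(7) f(2)] inner_le_inner_nonneg[OF f(8) f(1)]
    by (simp add: inner_commute)
  finally show ?thesis unfolding bDLP_obj_def .
qed

lemma boundary_LP_optimal_if_equal_obj:
  fixes A :: "real^'j^'k"
  assumes "bLP_feasible A \<beta> b T Uc u0 uN" "bDLP_feasible A \<gamma> c T Pc pN p0"
    and "bLP_obj A \<gamma> c T Pc u0 uN = bDLP_obj A \<beta> b T Uc pN p0"
  shows "bLP_optimal A \<beta> b \<gamma> c T Uc Pc u0 uN \<and> bDLP_optimal A \<beta> b \<gamma> c T Uc Pc pN p0"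
  unfolding bLP_optimal_def bDLP_optimal_def
  using assms boundary_LP_weak_duality[of A \<beta> b T Uc _ _ \<gamma> c Pc pN p0]
    boundary_LP_weak_duality[of A \<beta> b T Uc u0 uN \<gamma> c Pc]
  by auto

lemma boundary_LP_optimal_if_complementary_slack:
  fixes A :: "real^'j^'k"
  assumes nonneg: "0 \<le> u0" "0 \<le> uN" "0 \<le> pN" "0 \<le> p0"
    and slack_nonneg: "0 \<le> x0" "0 \<le> xN" "0 \<le> qN" "0 \<le> q0"
    and primal_slack: "A *v u0 + x0 = \<beta>" "A *v u0 + A *v uN + xN = \<beta> + T *\<^sub>R b - A *v Uc"
    and dual_slack: "transpose A *v pN - qN = \<gamma>"
      "transpose A *v pN + transpose A *v p0 - q0 = \<gamma> + T *\<^sub>R c - transpose A *v Pc"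
    and compl: "p0 \<bullet> x0 = 0" "pN \<bullet> xN = 0" "u0 \<bullet> q0 = 0" "uN \<bullet> qN = 0"
  shows "bLP_optimal A \<beta> b \<gamma> c T Uc Pc u0 uN \<and> bDLP_optimal A \<beta> b \<gamma> c T Uc Pc pN p0"
proof (rule boundary_LP_optimal_if_equal_obj)
  have "A *v u0 \<le> \<beta>" "A *v u0 + A *v uN \<le> \<beta> + T *\<^sub>R b - A *v Uc"
    by (metis primal_slack slack_nonneg(1,2) le_add_same_cancel1)+
  then show "bLP_feasible A \<beta> b T Uc u0 uN"
    unfolding bLP_feasible_def using nonneg by simp
  have "\<gamma> \<le> transpose A *v pN" "\<gamma> + T *\<^sub>R c - transpose A *v Pc \<le> transpose A *v pN + transpose A *v p0"
    by (metis dual_slack slack_nonneg(3,4) diff_le_eq le_add_same_cancel1)+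
  then show "bDLP_feasible A \<gamma> c T Pc pN p0"
    unfolding bDLP_feasible_def using nonneg by simp
  have "bDLP_obj A \<beta> b T Uc pN p0 = (A *v u0 + A *v uN + xN) \<bullet> pN + (A *v u0 + x0) \<bullet> p0"
    unfolding bDLP_obj_def primal_slack ..
  also have "\<dots> = (transpose A *v pN + transpose A *v p0) \<bullet> u0 + (transpose A *v pN) \<bullet> uN"
    using compl by (simp add: inner_add_left inner_add_right inner_transpose_mult
        inner_commute[of _ pN] inner_commute[of _ p0])
  also have "\<dots> = bLP_obj A \<gamma> c T Pc u0 uN + u0 \<bullet> q0 + uN \<bullet> qN"
    unfolding bLP_obj_def dual_slack(2)[symmetric] unfolding dual_slack(1)[symmetric]
    by (simp add: inner_diff_right inner_commute[of _ u0] inner_commute[of _ uN])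
  finally show "bLP_obj A \<gamma> c T Pc u0 uN = bDLP_obj A \<beta> b T Uc pN p0"
    using compl by simp
qed

lemma xseq_last_eq:
  fixes A :: "real^'j^'k"
  assumes "\<forall>n\<in>{1..N}. A *v u n + xd n = b" and "(\<Sum>n\<in>{1..N}. \<tau> n) = T"
  shows "xseq x0 xd \<tau> N = x0 + T *\<^sub>R b - A *v (\<Sum>n\<in>{1..N}. \<tau> n *\<^sub>R u n)"
proof -
  have "(\<Sum>n\<in>{1..N}. \<tau> n *\<^sub>R xd n) = (\<Sum>n\<in>{1..N}. \<tau> n *\<^sub>R b - A *v (\<tau> n *\<^sub>R u n))"
    using assms(1) by (intro sum.cong) (auto simp: matrix_vector_mult_scaleR algebra_simps)
  also have "\<dots> = T *\<^sub>R b - A *v (\<Sum>n\<in>{1..N}. \<tau> n *\<^sub>R u n)"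
    using assms(2) by (simp add: sum_subtractf scaleR_sum_left[symmetric]
        linear_sum[OF matrix_vector_mul_linear])
  finally show ?thesis unfolding xseq_def by simp
qed

lemma qseq_first_eq:
  fixes A :: "real^'j^'k"
  assumes "\<forall>n\<in>{1..N}. transpose A *v p n - qd n = c" and "(\<Sum>n\<in>{1..N}. \<tau> n) = T"
  shows "qseq N qN qd \<tau> 0 = qN + transpose A *v (\<Sum>n\<in>{1..N}. \<tau> n *\<^sub>R p n) - T *\<^sub>R c"
proof -
  have "(\<Sum>n\<in>{1..N}. \<tau> n *\<^sub>R qd n) = (\<Sum>n\<in>{1..N}. transpose A *v (\<tau> n *\<^sub>R p n) - \<tau> n *\<^sub>R c)"
    using assms(1) by (intro sum.cong) (auto simp: matrix_vector_mult_scaleR algebra_simps)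
  also have "\<dots> = transpose A *v (\<Sum>n\<in>{1..N}. \<tau> n *\<^sub>R p n) - T *\<^sub>R c"
    using assms(2) by (simp add: sum_subtractf scaleR_sum_left[symmetric]
        linear_sum[OF matrix_vector_mul_linear])
  finally show ?thesis unfolding qseq_def by simp
qed

text \<open>Non-degeneracy, \<open>T > 0\<close> and the sign conditions on \<open>\<tau>\<close>, \<open>xseq\<close> and \<open>qseq\<close> are deliberately
  unused: only the boundary values and the integrated rates enter the boundary LP.\<close>

theorem mainTheorem3:
  fixes A :: "real^'j^'k" and \<beta> b :: "real^'k" and \<gamma> c :: "real^'j" and T :: real
    and N :: nat and Ks :: "nat \<Rightarrow> 'k set" and Js :: "nat \<Rightarrow> 'j set"
    and u :: "nat \<Rightarrow> real^'j" and xd :: "nat \<Rightarrow> real^'k"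
    and p :: "nat \<Rightarrow> real^'k" and qd :: "nat \<Rightarrow> real^'j" and v :: "nat \<Rightarrow> 'k + 'j"
    and u0b uNb qN q0b :: "real^'j" and x0 xNb p0b pNb :: "real^'k" and \<tau> :: "nat \<Rightarrow> real"
  assumes T_pos: "T > 0"
    and nondeg: "nondeg_I A b c"
    and bseq: "base_sequence A b c N Ks Js u xd p qd v"
    and sys: "base_seq_system A \<beta> \<gamma> T N Ks Js xd qd v u0b uNb qN q0b x0 xNb p0b pNb \<tau>"
    and nonneg_bd: "0 \<le> u0b" "0 \<le> uNb" "0 \<le> qN" "0 \<le> q0b" "0 \<le> x0" "0 \<le> xNb" "0 \<le> p0b" "0 \<le> pNb"
    and nonneg_tau: "\<forall>n\<in>{1..N}. 0 \<le> \<tau> n"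
    and nonneg_xq: "\<forall>n\<in>{0..N}. 0 \<le> xseq x0 xd \<tau> n \<and> 0 \<le> qseq N qN qd \<tau> n"
  shows "bLP_optimal A \<beta> b \<gamma> c T (\<Sum>n\<in>{1..N}. \<tau> n *\<^sub>R u n) (\<Sum>n\<in>{1..N}. \<tau> n *\<^sub>R p n) u0b uNb
       \<and> bDLP_optimal A \<beta> b \<gamma> c T (\<Sum>n\<in>{1..N}. \<tau> n *\<^sub>R u n) (\<Sum>n\<in>{1..N}. \<tau> n *\<^sub>R p n) pNb p0b"
proof (rule boundary_LP_optimal_if_complementary_slack[OF nonneg_bd(1,2,8,7) nonneg_bd(5,6,3,4)])
  have rates: "\<forall>n\<in>{1..N}. A *v u n + xd n = b" "\<forall>n\<in>{1..N}. transpose A *v p n - qd n = c"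
    using bseq unfolding base_sequence_def primal_basic_sol_def dual_basic_sol_def by auto
  have total: "(\<Sum>n\<in>{1..N}. \<tau> n) = T"
    and compl: "\<forall>j\<in>Js 0. u0b $ j = 0" "\<forall>k. k \<notin> Ks 0 \<longrightarrow> x0 $ k = 0"
      "\<forall>k\<in>Ks 0. p0b $ k = 0" "\<forall>j. j \<notin> Js 0 \<longrightarrow> q0b $ j = 0"
      "\<forall>k\<in>Ks (N+1). pNb $ k = 0" "\<forall>j. j \<notin> Js (N+1) \<longrightarrow> qN $ j = 0"
      "\<forall>j\<in>Js (N+1). uNb $ j = 0" "\<forall>k. k \<notin> Ks (N+1) \<longrightarrow> xNb $ k = 0"
    and d: "A *v u0b + x0 = \<beta>" "transpose A *v pNb - qN = \<gamma>"
    and e: "A *v uNb + xNb - xseq x0 xd \<tau> N = 0" "transpose A *v p0b - q0b + qseq N qN qd \<tau> 0 = 0"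
    using sys unfolding base_seq_system_def Let_def by auto
  show "A *v u0b + x0 = \<beta>" "transpose A *v pNb - qN = \<gamma>" by (fact d)+
  have "xNb = x0 + T *\<^sub>R b - A *v (\<Sum>n\<in>{1..N}. \<tau> n *\<^sub>R u n) - A *v uNb"
    using e(1) unfolding xseq_last_eq[OF rates(1) total] by (simp add: algebra_simps)
  then show "A *v u0b + A *v uNb + xNb = \<beta> + T *\<^sub>R b - A *v (\<Sum>n\<in>{1..N}. \<tau> n *\<^sub>R u n)"
    unfolding d(1)[symmetric] by (simp add: algebra_simps)
  have "q0b = transpose A *v p0b + qN + transpose A *v (\<Sum>n\<in>{1..N}. \<tau> n *\<^sub>R p n) - T *\<^sub>R c"
    using e(2) unfolding qseq_first_eq[OF rates(2) total] by (simp add: algebra_simps)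
  then show "transpose A *v pNb + transpose A *v p0b - q0b
      = \<gamma> + T *\<^sub>R c - transpose A *v (\<Sum>n\<in>{1..N}. \<tau> n *\<^sub>R p n)"
    unfolding d(2)[symmetric] by (simp add: algebra_simps)
  show "p0b \<bullet> x0 = 0" "pNb \<bullet> xNb = 0" "u0b \<bullet> q0b = 0" "uNb \<bullet> qN = 0"
    using compl by (intro inner_eq_0_if_disjoint_support, blast)+
qed

end
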